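(* Let $G$ be a nice connected graph of size $m$, and let $W$ be a closed walk of $G$ of length $p$ going through all vertices of $G$. Then ${\rm ML}^{\rm W}(G) \leq p+2m$.
   Context: All graphs are finite and simple. A walk of a graph $G$ is a sequence of vertices $u_0u_1\dots u_p$ with $u_tu_{t+1}\in E(G)$ for all $t$ (vertices and edges may repeat); its length is $p$; it is closed if $u_0=u_p$. For a walk $W$ of $G$, $G+W$ is the multigraph on $V(G)$ whose edge multiset consists of $E(G)$ together with each edge added as many times as $W$ traverses it. A multigraph is locally irregular if no two adjacent vertices have the same degree; a walk $W$ is irregularising if $G+W$ is locally irregular. A graph is nice if it is connected and not isomorphic to $K_2$. ${\rm ML}^{\rm W}(G)$ denotes the minimum length of an irregularising walk of $G$ (a walk of length $0$ is allowed). *)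

theory Defs
  imports Main
begin

definition simple_graph :: "'a set \<Rightarrow> 'a set set \<Rightarrow> bool" where
  "simple_graph V E \<longleftrightarrow> finite V \<and> (\<forall>e\<in>E. \<exists>u v. e = {u, v} \<and> u \<noteq> v \<and> u \<in> V \<and> v \<in> V)"

definition is_walk :: "'a set \<Rightarrow> 'a set set \<Rightarrow> 'a list \<Rightarrow> bool" where
  "is_walk V E W \<longleftrightarrow> W \<noteq> [] \<and> set W \<subseteq> V \<and>
     (\<forall>i. Suc i < length W \<longrightarrow> {W ! i, W ! Suc i} \<in> E)"

definition walk_length :: "'a list \<Rightarrow> nat" where
  "walk_length W = length W - 1"

definition closed_walk :: "'a set \<Rightarrow> 'a set set \<Rightarrow> 'a list \<Rightarrow> bool" where
  "closed_walk V E W \<longleftrightarrow> is_walk V E W \<and> hd W = last W"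

definition connected_graph :: "'a set \<Rightarrow> 'a set set \<Rightarrow> bool" where
  "connected_graph V E \<longleftrightarrow> V \<noteq> {} \<and>
     (\<forall>u\<in>V. \<forall>v\<in>V. \<exists>W. is_walk V E W \<and> hd W = u \<and> last W = v)"

text \<open>Nice: connected and not isomorphic to K2 (for simple graphs, K2 is exactly
  two vertices and one edge).\<close>
definition nice_graph :: "'a set \<Rightarrow> 'a set set \<Rightarrow> bool" where
  "nice_graph V E \<longleftrightarrow> connected_graph V E \<and> \<not> (card V = 2 \<and> card E = 1)"

definition traversals :: "'a list \<Rightarrow> 'a set \<Rightarrow> nat" where
  "traversals W e = card {i. Suc i < length W \<and> {W ! i, W ! Suc i} = e}"

text \<open>Degree of v in the multigraph G + W.\<close>
definition deg_plus :: "'a set set \<Rightarrow> 'a list \<Rightarrow> 'a \<Rightarrow> nat" where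
  "deg_plus E W v = (\<Sum>e\<in>{e\<in>E. v \<in> e}. 1 + traversals W e)"

text \<open>G + W is locally irregular: adjacent vertices have distinct degrees
  (adjacency in G + W coincides with adjacency in G).\<close>
definition irregularising :: "'a set \<Rightarrow> 'a set set \<Rightarrow> 'a list \<Rightarrow> bool" where
  "irregularising V E W \<longleftrightarrow> is_walk V E W \<and>
     (\<forall>u v. {u, v} \<in> E \<longrightarrow> u \<noteq> v \<longrightarrow> deg_plus E W u \<noteq> deg_plus E W v)"

definition min_irreg_walk_length :: "'a set \<Rightarrow> 'a set set \<Rightarrow> nat" where
  "min_irreg_walk_length V E = (LEAST k. \<exists>W. irregularising V E W \<and> walk_length W = k)"

end

theory Submission
  imports Defs
begin

text \<open>
  Replacing an occurrence of u in a walk by u w u, for an edge uw, gives a walk two steps longer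
  in which only the degrees of u and w in G + W change, each by 2. As W passes through every
  vertex, it suffices to find a list L of at most m edges such that adding twice the number of
  entries of L containing v to the degree of each v separates the values of adjacent vertices.

  Each vertex other than the first one of W is adjacent to its predecessor at its first
  occurrence. Going backwards through the vertices in order of first occurrence, the value of v
  is settled by repeating the edge from v to that predecessor p. This changes only v among the
  vertices after p, and each neighbour of v settled before excludes at most one number of
  repetitions, so a number at most the count of these neighbours works. The first two vertices
  are settled last, together, along the edge between them; as that edge cannot separate them,
  the third vertex is charged one more repetition to do so. Every edge is then charged once, to
  its endpoint settled last, except the edge between the first two vertices, whose charge was
  paid by the third: at most m repetitions in total.
\<close>

lemma simple_graph_edgeE:
  assumes "simple_graph V E" and "e \<in> E"
  obtains u w where "e = {u, w}" and "u \<noteq> w" and "u \<in> V" and "w \<in> V"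
  using assms unfolding simple_graph_def by blast

lemma simple_graph_edgeD:
  assumes "simple_graph V E" and "{u, w} \<in> E"
  shows "u \<noteq> w \<and> u \<in> V \<and> w \<in> V"
  using simple_graph_edgeE[OF assms] by (metis doubleton_eq_iff)

lemma simple_graph_finite_edges:
  assumes "simple_graph V E"
  shows "finite E"
proof -
  have "E \<subseteq> Pow V"
    using assms by (auto elim: simple_graph_edgeE)
  then show ?thesis
    using assms finite_subset unfolding simple_graph_def by blast
qed

section \<open>Detours\<close>

lemma is_walk_iff_successively:
  "is_walk V E W \<longleftrightarrow> W \<noteq> [] \<and> set W \<subseteq> V \<and> successively (\<lambda>x y. {x, y} \<in> E) W"
  by (simp add: is_walk_def successively_conv_nth)

lemma is_walk_detour:
  assumes "is_walk V E (xs @ u # ys)" and "{u, w} \<in> E" and "w \<in> V"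
  shows "is_walk V E (xs @ u # w # u # ys)"
  using assms by (auto simp: is_walk_iff_successively successively_append_iff insert_commute)

fun walk_edges :: "'a list \<Rightarrow> 'a set list" where
  "walk_edges (x # y # W) = {x, y} # walk_edges (y # W)"
| "walk_edges _ = []"

lemma length_walk_edges: "length (walk_edges W) = length W - 1"
  by (induction W rule: walk_edges.induct) auto

lemma nth_walk_edges: "Suc i < length W \<Longrightarrow> walk_edges W ! i = {W ! i, W ! Suc i}"
  by (induction W arbitrary: i rule: walk_edges.induct) (auto simp: nth_Cons split: nat.split)

lemma traversals_eq_count_list: "traversals W e = count_list (walk_edges W) e"
proof -
  have "{i. Suc i < length W \<and> {W ! i, W ! Suc i} = e}
      = {i. i < length (walk_edges W) \<and> e = walk_edges W ! i}"
    by (auto simp: length_walk_edges nth_walk_edges)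
  then show ?thesis
    by (simp add: traversals_def count_list_eq_length_filter length_filter_conv_card)
qed

lemma walk_edges_append: "walk_edges (xs @ u # ys) = walk_edges (xs @ [u]) @ walk_edges (u # ys)"
  by (induction xs rule: induct_list012) auto

lemma traversals_detour:
  "traversals (xs @ u # w # u # ys) e = traversals (xs @ u # ys) e + (if e = {u, w} then 2 else 0)"
proof -
  have "walk_edges (xs @ u # w # u # ys) = walk_edges (xs @ [u]) @ {u, w} # {u, w} # walk_edges (u # ys)"
    by (subst walk_edges_append) (simp add: insert_commute)
  moreover have "walk_edges (xs @ u # ys) = walk_edges (xs @ [u]) @ walk_edges (u # ys)"
    by (rule walk_edges_append)
  ultimately show ?thesis
    by (simp add: traversals_eq_count_list)
qed

lemma deg_plus_detour:
  assumes "finite E" and "{u, w} \<in> E"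
  shows "deg_plus E (xs @ u # w # u # ys) v = deg_plus E (xs @ u # ys) v + (if v \<in> {u, w} then 2 else 0)"
proof -
  have "deg_plus E (xs @ u # w # u # ys) v
      = (\<Sum>e\<in>{e\<in>E. v \<in> e}. (1 + traversals (xs @ u # ys) e) + (if e = {u, w} then 2 else 0))"
    unfolding deg_plus_def traversals_detour by (simp only: add.assoc)
  also have "\<dots> = deg_plus E (xs @ u # ys) v + (\<Sum>e\<in>{e\<in>E. v \<in> e}. if e = {u, w} then 2 else 0)"
    unfolding deg_plus_def by (rule sum.distrib)
  also have "(\<Sum>e\<in>{e\<in>E. v \<in> e}. if e = {u, w} then 2 else 0) = (if v \<in> {u, w} then 2 else (0::nat))"
    using assms by (simp add: sum.delta')
  finally show ?thesis .
qed

text \<open>The degrees after one detour u w u for each entry {u, w} of L.\<close>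
definition detour_degree :: "('a \<Rightarrow> nat) \<Rightarrow> 'a set list \<Rightarrow> 'a \<Rightarrow> nat" where
  "detour_degree d L v = d v + 2 * length (filter ((\<in>) v) L)"

lemma detour_degree_Nil [simp]: "detour_degree d [] = d"
  by (simp add: detour_degree_def fun_eq_iff)

lemma detour_degree_Cons:
  "detour_degree d (e # L) v = detour_degree d L v + (if v \<in> e then 2 else 0)"
  by (simp add: detour_degree_def)

lemma detour_degree_append_replicate:
  "detour_degree d (L @ replicate x e) v = detour_degree d L v + (if v \<in> e then 2 * x else 0)"
  by (simp add: detour_degree_def filter_replicate)

lemma walk_with_detours:
  assumes G: "simple_graph V E" and W: "is_walk V E W" "set W = V" and L: "set L \<subseteq> E"
  shows "\<exists>W'. is_walk V E W' \<and> set W' = V \<and> length W' = length W + 2 * length L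
    \<and> deg_plus E W' = detour_degree (deg_plus E W) L"
  using L
proof (induction L)
  case Nil
  then show ?case using W by auto
next
  case (Cons e L)
  then obtain W' where W': "is_walk V E W'" "set W' = V" "length W' = length W + 2 * length L"
    "deg_plus E W' = detour_degree (deg_plus E W) L"
    by auto
  obtain u w where e: "e = {u, w}" "w \<in> V" "u \<in> V"
    using G Cons.prems by (auto elim: simple_graph_edgeE)
  then obtain xs ys where xs_ys: "W' = xs @ u # ys"
    using W'(2) by (metis split_list)
  let ?W = "xs @ u # w # u # ys"
  have uw: "{u, w} \<in> E"
    using Cons.prems e by simp
  have "is_walk V E ?W"
    using is_walk_detour[OF _ uw \<open>w \<in> V\<close>] W'(1) xs_ys by simp
  moreover have "deg_plus E ?W = detour_degree (deg_plus E W) (e # L)"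
    using deg_plus_detour[OF simple_graph_finite_edges[OF G] uw] W'(4) xs_ys e(1)
    by (simp add: fun_eq_iff detour_degree_Cons)
  moreover have "set ?W = V" "length ?W = length W + 2 * length (e # L)"
    using W' xs_ys e by auto
  ultimately show ?case by blast
qed

section \<open>Separating adjacent degrees by repeated detours\<close>

definition proper_on :: "'a set set \<Rightarrow> 'a set \<Rightarrow> ('a \<Rightarrow> nat) \<Rightarrow> bool" where
  "proper_on E S f \<longleftrightarrow> (\<forall>u w. {u, w} \<in> E \<longrightarrow> u \<in> S \<longrightarrow> w \<in> S \<longrightarrow> u \<noteq> w \<longrightarrow> f u \<noteq> f w)"

lemma proper_on_empty [simp]: "proper_on E {} f"
  by (simp add: proper_on_def)

lemma proper_on_singleton [simp]: "proper_on E {q} f"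
  by (simp add: proper_on_def)

lemma proper_on_insert:
  "proper_on E (insert v S) f \<longleftrightarrow>
    proper_on E S f \<and> (\<forall>w\<in>S. {v, w} \<in> E \<longrightarrow> w \<noteq> v \<longrightarrow> f v \<noteq> f w)"
  unfolding proper_on_def by (auto simp: insert_commute) (metis insert_commute)

lemma proper_on_cong: "(\<And>u. u \<in> S \<Longrightarrow> f u = g u) \<Longrightarrow> proper_on E S f \<longleftrightarrow> proper_on E S g"
  unfolding proper_on_def by auto

lemma proper_on_card_2:
  assumes "card U = 2" and "p \<in> U" and "\<forall>q\<in>U - {p}. f p \<noteq> f q"
  shows "proper_on E U f"
proof -
  have "card (U - {p}) = 1"
    using assms(1,2) by simp
  then obtain q where "U - {p} = {q}"
    by (rule card_1_singletonE)
  then have "U = insert p {q}" and "f p \<noteq> f q"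
    using assms(2,3) by auto
  then show ?thesis
    by (simp add: proper_on_insert)
qed

lemma irregularising_iff_proper_on:
  assumes "simple_graph V E"
  shows "irregularising V E W \<longleftrightarrow> is_walk V E W \<and> proper_on E V (deg_plus E W)"
  using simple_graph_edgeD[OF assms] unfolding irregularising_def proper_on_def by blast

lemma exists_le_card_notin:
  fixes B :: "nat set"
  assumes "finite B"
  shows "\<exists>x \<le> card B. x \<notin> B"
proof (rule ccontr)
  assume "\<not> ?thesis"
  then have "{0..card B} \<subseteq> B" by auto
  then have "card {0..card B} \<le> card B"
    using assms by (rule card_mono[rotated])
  then show False by simp
qed

lemma exists_shift_avoiding:
  fixes c d :: "'b \<Rightarrow> nat"
  assumes "finite A" and "0 < k"
  shows "\<exists>x \<le> card A. \<forall>a\<in>A. c a + k * x \<noteq> d a"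
proof -
  define B where "B = (\<Union>a\<in>A. {x. c a + k * x = d a})"
  have single: "{x. c a + k * x = d a} \<subseteq> {(d a - c a) div k}" for a
  proof
    fix x
    assume "x \<in> {x. c a + k * x = d a}"
    then have "d a - c a = k * x" by auto
    then show "x \<in> {(d a - c a) div k}"
      using \<open>0 < k\<close> by simp
  qed
  then have "finite B"
    unfolding B_def using assms(1) finite_subset by blast
  have "card B \<le> (\<Sum>a\<in>A. card {x. c a + k * x = d a})"
    unfolding B_def using assms(1) by (rule card_UN_le)
  also have "\<dots> \<le> (\<Sum>a\<in>A. card {(d a - c a) div k})"
    using single by (intro sum_mono card_mono) simp_all
  finally have "card B \<le> card A" by simp
  moreover obtain x where "x \<le> card B" and "x \<notin> B"
    using exists_le_card_notin[OF \<open>finite B\<close>] by blast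
  ultimately show ?thesis
    unfolding B_def by (intro exI[of _ x]) auto
qed

lemma card_Pair_image_Un_le:
  assumes "finite X" and "finite Y"
  shows "card (Pair a ` X \<union> Pair b ` Y) \<le> card X + card Y"
proof -
  have "card (Pair a ` X \<union> Pair b ` Y) \<le> card (Pair a ` X) + card (Pair b ` Y)"
    by (rule card_Un_le)
  also have "\<dots> \<le> card X + card Y"
    using assms by (intro add_mono card_image_le)
  finally show ?thesis .
qed

lemma exists_detours_avoiding:
  fixes d :: "'a \<Rightarrow> nat"
  assumes "finite A" and "\<forall>(c, w)\<in>A. c \<in> {s, t} \<and> w \<notin> {s, t}"
  shows "\<exists>x \<le> card A. \<forall>(c, w)\<in>A.
    detour_degree d (L @ replicate x {s, t}) c \<noteq> detour_degree d (L @ replicate x {s, t}) w"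
proof -
  obtain x where "x \<le> card A"
    and x: "\<forall>a\<in>A. detour_degree d L (fst a) + 2 * x \<noteq> detour_degree d L (snd a)"
    using exists_shift_avoiding[OF assms(1), where k = 2 and c = "\<lambda>a. detour_degree d L (fst a)"
        and d = "\<lambda>a. detour_degree d L (snd a)"] by auto
  have "detour_degree d (L @ replicate x {s, t}) c \<noteq> detour_degree d (L @ replicate x {s, t}) w"
    if "(c, w) \<in> A" for c w
  proof -
    have "c \<in> {s, t}" and "w \<notin> {s, t}"
      using assms(2) that by auto
    moreover have "detour_degree d L c + 2 * x \<noteq> detour_degree d L w"
      using x that by fastforce
    ultimately show ?thesis
      by (simp add: detour_degree_append_replicate)
  qed
  then show ?thesis
    using \<open>x \<le> card A\<close> by blast
qed

lemma proper_on_detours_outside: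
  assumes "S \<inter> e = {}"
  shows "proper_on E S (detour_degree d (L @ replicate x e)) \<longleftrightarrow> proper_on E S (detour_degree d L)"
  using assms by (intro proper_on_cong) (auto simp: detour_degree_append_replicate)

lemma proper_on_insert_by_detours:
  fixes d :: "'a \<Rightarrow> nat"
  assumes "finite T" and "proper_on E T (detour_degree d L)" and "v \<notin> T" and "p \<notin> insert v T"
    and "finite Q" and "v \<notin> Q" and "p \<notin> Q"
  shows "\<exists>x \<le> card {w\<in>T. {v, w} \<in> E} + card Q.
    proper_on E (insert v T) (detour_degree d (L @ replicate x {v, p})) \<and>
    (\<forall>q\<in>Q. detour_degree d (L @ replicate x {v, p}) p \<noteq> detour_degree d (L @ replicate x {v, p}) q)"
proof -
  let ?N = "{w\<in>T. {v, w} \<in> E}"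
  define A where "A = Pair v ` ?N \<union> Pair p ` Q"
  have "finite A"
    using assms(1,5) by (simp add: A_def)
  have card_A: "card A \<le> card ?N + card Q"
    unfolding A_def using assms(1,5) by (intro card_Pair_image_Un_le) auto
  have sep: "\<forall>(c, w)\<in>A. c \<in> {v, p} \<and> w \<notin> {v, p}"
    using assms(3,4,6,7) by (auto simp: A_def)
  obtain x where "x \<le> card A" and x: "\<forall>(c, w)\<in>A.
      detour_degree d (L @ replicate x {v, p}) c \<noteq> detour_degree d (L @ replicate x {v, p}) w"
    using exists_detours_avoiding[OF \<open>finite A\<close> sep, where d = d and L = L] by blast
  let ?g = "detour_degree d (L @ replicate x {v, p})"
  have "proper_on E T ?g"
    using assms(2,3,4) by (subst proper_on_detours_outside) auto
  moreover have "\<forall>w\<in>T. {v, w} \<in> E \<longrightarrow> w \<noteq> v \<longrightarrow> ?g v \<noteq> ?g w"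
    using x by (auto simp: A_def)
  moreover have "\<forall>q\<in>Q. ?g p \<noteq> ?g q"
    using x by (auto simp: A_def)
  moreover have "x \<le> card ?N + card Q"
    using \<open>x \<le> card A\<close> card_A by linarith
  ultimately show ?thesis
    by (intro exI[of _ x]) (simp add: proper_on_insert)
qed

lemma proper_on_insert_edge_by_detours:
  fixes d :: "'a \<Rightarrow> nat"
  assumes "finite T" and "proper_on E T (detour_degree d L)" and "proper_on E {s, t} (detour_degree d L)"
    and "s \<notin> T" and "t \<notin> T"
  shows "\<exists>x \<le> card {w\<in>T. {s, w} \<in> E} + card {w\<in>T. {t, w} \<in> E}.
    proper_on E (insert s (insert t T)) (detour_degree d (L @ replicate x {s, t}))"
proof -
  let ?Ns = "{w\<in>T. {s, w} \<in> E}" and ?Nt = "{w\<in>T. {t, w} \<in> E}"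
  define A where "A = Pair s ` ?Ns \<union> Pair t ` ?Nt"
  have "finite A"
    using assms(1) by (simp add: A_def)
  have card_A: "card A \<le> card ?Ns + card ?Nt"
    unfolding A_def using assms(1) by (intro card_Pair_image_Un_le) auto
  have sep: "\<forall>(c, w)\<in>A. c \<in> {s, t} \<and> w \<notin> {s, t}"
    using assms(4,5) by (auto simp: A_def)
  obtain x where "x \<le> card A" and x: "\<forall>(c, w)\<in>A.
      detour_degree d (L @ replicate x {s, t}) c \<noteq> detour_degree d (L @ replicate x {s, t}) w"
    using exists_detours_avoiding[OF \<open>finite A\<close> sep, where d = d and L = L] by blast
  let ?g = "detour_degree d (L @ replicate x {s, t})"
  have "proper_on E T ?g"
    using assms(2,4,5) by (subst proper_on_detours_outside) auto
  moreover have "\<forall>w\<in>T. {t, w} \<in> E \<longrightarrow> w \<noteq> t \<longrightarrow> ?g t \<noteq> ?g w"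
    using x by (auto simp: A_def)
  moreover have "\<forall>w\<in>T. {s, w} \<in> E \<longrightarrow> w \<noteq> s \<longrightarrow> ?g s \<noteq> ?g w"
    using x by (auto simp: A_def)
  moreover have "?g s \<noteq> ?g t" if "{s, t} \<in> E" and "s \<noteq> t"
    using assms(3) that by (auto simp: proper_on_def detour_degree_append_replicate)
  moreover have "x \<le> card ?Ns + card ?Nt"
    using \<open>x \<le> card A\<close> card_A by linarith
  ultimately show ?thesis
    by (intro exI[of _ x]) (auto simp: proper_on_insert)
qed

definition edges_within :: "'a set set \<Rightarrow> 'a set \<Rightarrow> 'a set set" where
  "edges_within E S = {e \<in> E. e \<subseteq> S}"

lemma card_edges_within_insert:
  assumes "finite E" and "v \<notin> S"
  shows "card (edges_within E S) + card {w\<in>S. {v, w} \<in> E} \<le> card (edges_within E (insert v S))"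
proof -
  let ?N = "{w\<in>S. {v, w} \<in> E}"
  have inj: "inj_on (\<lambda>w. {v, w}) ?N"
    using assms(2) by (auto simp: inj_on_def doubleton_eq_iff)
  have "finite ?N"
    using finite_imageD[OF finite_subset[OF _ assms(1)] inj] by blast
  have "edges_within E S \<inter> (\<lambda>w. {v, w}) ` ?N = {}"
    using assms(2) by (auto simp: edges_within_def)
  then have "card (edges_within E S \<union> (\<lambda>w. {v, w}) ` ?N) = card (edges_within E S) + card ?N"
    using assms(1) \<open>finite ?N\<close> by (simp add: card_Un_disjoint card_image[OF inj] edges_within_def)
  moreover have "card (edges_within E S \<union> (\<lambda>w. {v, w}) ` ?N) \<le> card (edges_within E (insert v S))"
    using assms(1) by (intro card_mono) (auto simp: edges_within_def)
  ultimately show ?thesis by simp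
qed

lemma card_edges_within_insert_edge:
  assumes "finite E" and "finite T" and "{s, t} \<in> E" and "s \<noteq> t" and "s \<notin> T" and "t \<notin> T"
  shows "card (edges_within E T) + card {w\<in>T. {s, w} \<in> E} + card {w\<in>T. {t, w} \<in> E} + 1
    \<le> card (edges_within E (insert s (insert t T)))"
proof -
  have "{w \<in> insert t T. {s, w} \<in> E} = insert t {w\<in>T. {s, w} \<in> E}"
    using assms(3) by auto
  then have "card {w \<in> insert t T. {s, w} \<in> E} = card {w\<in>T. {s, w} \<in> E} + 1"
    using assms(2,6) by simp
  then show ?thesis
    using card_edges_within_insert[OF assms(1) assms(6)]
      card_edges_within_insert[OF assms(1), of s "insert t T"] assms(4,5) by simp
qed

text \<open>
  The vertices outside U have their final values. While U consists of the first two vertices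
  only, one more detour is allowed: the one that separated them.
\<close>
definition detours_settle :: "'a set \<Rightarrow> 'a set set \<Rightarrow> ('a \<Rightarrow> nat) \<Rightarrow> 'a set \<Rightarrow> 'a set list \<Rightarrow> bool" where
  "detours_settle V E d U L \<longleftrightarrow> set L \<subseteq> E
    \<and> length L \<le> card (edges_within E (V - U)) + (if card U = 2 then 1 else 0)
    \<and> proper_on E (V - U) (detour_degree d L)
    \<and> (card U = 2 \<longrightarrow> proper_on E U (detour_degree d L))"

lemma detours_settle_remove:
  fixes d :: "'a \<Rightarrow> nat"
  assumes G: "simple_graph V E" and "U \<subseteq> V" and "2 \<le> card U" and "v \<in> V - U" and "p \<in> U"
    and vp: "{v, p} \<in> E" and settle: "detours_settle V E d (insert v U) L"
  shows "\<exists>L'. detours_settle V E d U L'"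
proof -
  define T where "T = V - insert v U"
  define Q where "Q = (if card U = 2 then U - {p} else {})"
  have "finite V"
    using G by (simp add: simple_graph_def)
  have "finite U"
    using \<open>U \<subseteq> V\<close> \<open>finite V\<close> by (rule finite_subset)
  then have "card (insert v U) \<noteq> 2"
    using \<open>v \<in> V - U\<close> \<open>2 \<le> card U\<close> by simp
  then have L: "set L \<subseteq> E" "length L \<le> card (edges_within E T)" "proper_on E T (detour_degree d L)"
    using settle by (simp_all add: detours_settle_def T_def)
  have "finite T" and "v \<notin> T" and "p \<notin> insert v T" and "finite Q" and "v \<notin> Q" and "p \<notin> Q"
    using \<open>finite V\<close> \<open>finite U\<close> \<open>p \<in> U\<close> \<open>v \<in> V - U\<close> by (auto simp: T_def Q_def)
  from proper_on_insert_by_detours[OF this(1) L(3) this(2-)]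
  obtain x where x: "x \<le> card {w\<in>T. {v, w} \<in> E} + card Q"
    and proper: "proper_on E (insert v T) (detour_degree d (L @ replicate x {v, p}))"
    and Q: "\<forall>q\<in>Q. detour_degree d (L @ replicate x {v, p}) p \<noteq> detour_degree d (L @ replicate x {v, p}) q"
    by blast
  have V_U: "V - U = insert v T"
    using \<open>v \<in> V - U\<close> by (auto simp: T_def)
  have "card (edges_within E T) + card {w\<in>T. {v, w} \<in> E} \<le> card (edges_within E (V - U))"
    unfolding V_U by (rule card_edges_within_insert[OF simple_graph_finite_edges[OF G] \<open>v \<notin> T\<close>])
  moreover have "card Q = (if card U = 2 then 1 else 0)"
    using \<open>p \<in> U\<close> by (simp add: Q_def)
  ultimately have "length (L @ replicate x {v, p}) \<le> card (edges_within E (V - U)) + (if card U = 2 then 1 else 0)"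
    using L(2) x by simp
  moreover have "card U = 2 \<longrightarrow> proper_on E U (detour_degree d (L @ replicate x {v, p}))"
    using proper_on_card_2[OF _ \<open>p \<in> U\<close>] Q by (simp add: Q_def)
  ultimately show ?thesis
    using L(1) vp proper V_U unfolding detours_settle_def
    by (intro exI[of _ "L @ replicate x {v, p}"]) (simp add: set_replicate_conv_if)
qed

lemma exists_detours_settle_prefix:
  fixes d :: "'a \<Rightarrow> nat"
  assumes G: "simple_graph V E" and W: "is_walk V E W" "set W = V" and "3 \<le> card V"
    and "k \<le> length W" and "2 \<le> k"
  shows "\<exists>L. detours_settle V E d (set (take k W)) L"
  using assms(5,6)
proof (induction k rule: inc_induct)
  case base
  show ?case
    using W(2) \<open>3 \<le> card V\<close> by (intro exI[of _ "[]"]) (simp add: detours_settle_def)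
next
  case (step n)
  define U where "U = set (take n W)"
  have U_V: "U \<subseteq> V"
    unfolding U_def W(2)[symmetric] by (rule set_take_subset)
  have take_Suc: "set (take (Suc n) W) = insert (W ! n) U"
    unfolding U_def using step.hyps by (simp add: take_Suc_conv_app_nth)
  have edge: "{W ! i, W ! Suc i} \<in> E" if "Suc i < length W" for i
    using W(1) that by (simp add: is_walk_def)
  have in_U: "W ! i \<in> U" if "i < n" for i
    using nth_mem[of i "take n W"] that step.hyps by (simp add: U_def)
  show ?case
  proof (cases "W ! n \<in> U")
    case True
    then show ?thesis
      using step.IH step.prems take_Suc by (simp add: U_def insert_absorb)
  next
    case False
    have "finite U"
      using U_V G finite_subset by (auto simp: simple_graph_def)
    have "W ! 0 \<noteq> W ! 1"
      using simple_graph_edgeD[OF G edge[of 0]] step.prems step.hyps by simp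
    then have "card {W ! 0, W ! 1} = 2"
      by simp
    moreover have "{W ! 0, W ! 1} \<subseteq> U"
      using in_U step.prems by simp
    ultimately have "2 \<le> card U"
      using card_mono[OF \<open>finite U\<close>] by metis
    moreover have "W ! n \<in> V - U" and "W ! (n - 1) \<in> U"
      using False W(2) step.hyps step.prems in_U by auto
    moreover have "{W ! n, W ! (n - 1)} \<in> E"
      using edge[of "n - 1"] step.prems step.hyps by (simp add: insert_commute)
    moreover obtain L where "detours_settle V E d (insert (W ! n) U) L"
      using step.IH step.prems take_Suc by (auto simp: U_def)
    ultimately have "\<exists>L'. detours_settle V E d U L'"
      by (rule detours_settle_remove[OF G U_V])
    then show ?thesis
      by (simp add: U_def)
  qed
qed

lemma exists_proper_detours:
  fixes d :: "'a \<Rightarrow> nat"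
  assumes G: "simple_graph V E" and W: "is_walk V E W" "set W = V" and "3 \<le> card V"
  shows "\<exists>L. set L \<subseteq> E \<and> length L \<le> card E \<and> proper_on E V (detour_degree d L)"
proof -
  define s where "s = W ! 0"
  define t where "t = W ! 1"
  define T where "T = V - {s, t}"
  have finite_V: "finite V" and finite_E: "finite E"
    using G simple_graph_finite_edges by (auto simp: simple_graph_def)
  have "card V \<le> length W"
    using card_length[of W] W(2) by simp
  then have "2 \<le> length W"
    using \<open>3 \<le> card V\<close> by simp
  then have st: "{s, t} \<in> E"
    using W(1) unfolding s_def t_def is_walk_def by (metis One_nat_def Suc_1 Suc_le_lessD)
  then have "s \<noteq> t" and "s \<in> V" and "t \<in> V"
    using simple_graph_edgeD[OF G] by auto
  have "set (take 2 W) = {s, t}"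
    using \<open>2 \<le> length W\<close> unfolding s_def t_def
    by (cases W; cases "tl W") (auto simp: numeral_2_eq_2)
  then obtain L where L: "set L \<subseteq> E" "length L \<le> card (edges_within E T) + 1"
      "proper_on E T (detour_degree d L)" "proper_on E {s, t} (detour_degree d L)"
    using exists_detours_settle_prefix[OF G W \<open>3 \<le> card V\<close> \<open>2 \<le> length W\<close>, of d]
      \<open>s \<noteq> t\<close> by (auto simp: detours_settle_def T_def)
  have "finite T" and "s \<notin> T" and "t \<notin> T"
    using finite_V by (auto simp: T_def)
  from proper_on_insert_edge_by_detours[OF this(1) L(3,4) this(2,3)]
  obtain x where x: "x \<le> card {w\<in>T. {s, w} \<in> E} + card {w\<in>T. {t, w} \<in> E}"
    and proper: "proper_on E (insert s (insert t T)) (detour_degree d (L @ replicate x {s, t}))"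
    by blast
  have V: "insert s (insert t T) = V"
    using \<open>s \<in> V\<close> \<open>t \<in> V\<close> by (auto simp: T_def)
  have "length (L @ replicate x {s, t}) \<le> card (edges_within E V)"
    using card_edges_within_insert_edge[OF finite_E \<open>finite T\<close> st \<open>s \<noteq> t\<close> \<open>s \<notin> T\<close> \<open>t \<notin> T\<close>]
      L(2) x V by simp
  also have "\<dots> \<le> card E"
    using finite_E by (intro card_mono) (auto simp: edges_within_def)
  finally show ?thesis
    using L(1) st proper V by (intro exI[of _ "L @ replicate x {s, t}"]) (simp add: set_replicate_conv_if)
qed

lemma nice_graph_card_le_2_no_edges:
  assumes G: "simple_graph V E" and "nice_graph V E" and "card V \<le> 2"
  shows "E = {}"
proof -
  have "finite V"
    using G by (simp add: simple_graph_def)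
  have edge: "e = V \<and> card V = 2" if e: "e \<in> E" for e
  proof -
    obtain u w where "e = {u, w}" "u \<noteq> w" "u \<in> V" "w \<in> V"
      using simple_graph_edgeE[OF G e] .
    then have "e \<subseteq> V" and "card e = 2"
      by auto
    moreover have "card e \<le> card V"
      using \<open>finite V\<close> \<open>e \<subseteq> V\<close> by (rule card_mono)
    ultimately have "card V = 2"
      using \<open>card V \<le> 2\<close> by linarith
    then show ?thesis
      using card_subset_eq[OF \<open>finite V\<close> \<open>e \<subseteq> V\<close>] \<open>card e = 2\<close> by simp
  qed
  show ?thesis
  proof (rule ccontr)
    assume "E \<noteq> {}"
    then obtain e where "e \<in> E"
      by blast
    then have "E = {V}" and "card V = 2"
      using edge by blast+
    then show False
      using \<open>nice_graph V E\<close> by (simp add: nice_graph_def)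
  qed
qed

lemma min_irreg_walk_length_le:
  "irregularising V E W \<Longrightarrow> min_irreg_walk_length V E \<le> walk_length W"
  unfolding min_irreg_walk_length_def by (rule Least_le) blast

theorem theorem4p1:
  fixes V :: "'a set" and E :: "'a set set" and W :: "'a list" and m p :: nat
  assumes "simple_graph V E"
    and "nice_graph V E"
    and "m = card E"
    and "closed_walk V E W"
    and "walk_length W = p"
    and "set W = V"
  shows "(\<exists>W'. irregularising V E W') \<and> min_irreg_walk_length V E \<le> p + 2 * m"
proof -
  have W: "is_walk V E W"
    using assms(4) by (simp add: closed_walk_def)
  obtain W' where W': "irregularising V E W'" "walk_length W' \<le> p + 2 * m"
  proof (cases "card V \<le> 2")
    case True
    then have "E = {}"
      using nice_graph_card_le_2_no_edges assms(1,2) by blast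
    then have "irregularising V E W"
      using W by (simp add: irregularising_def)
    then show thesis
      using that assms(5) by simp
  next
    case False
    then obtain L where L: "set L \<subseteq> E" "length L \<le> m" "proper_on E V (detour_degree (deg_plus E W) L)"
      using exists_proper_detours[OF assms(1) W assms(6)] assms(3) by fastforce
    obtain W' where "is_walk V E W'" "length W' = length W + 2 * length L"
      "deg_plus E W' = detour_degree (deg_plus E W) L"
      using walk_with_detours[OF assms(1) W assms(6) L(1)] by blast
    moreover have "length W \<noteq> 0"
      using W by (simp add: is_walk_def)
    ultimately have "irregularising V E W'" and "walk_length W' \<le> p + 2 * m"
      using L(2,3) assms(5) irregularising_iff_proper_on[OF assms(1)] by (auto simp: walk_length_def)
    then show thesis
      by (rule that)
  qed
  then show ?thesis
    using min_irreg_walk_length_le by (meson order_trans)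
qed

end
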